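(* For $n\ge 2$, let $S_n$ denote the bitsum (number of $1$s) of a bimultus bitstring of length $n$ chosen uniformly at random among all bimultus bitstrings of length $n$. Then \[ \lim_{n\to\infty}\frac{\mathbb{E}(S_n)}{n}=\frac12, \qquad \lim_{n\to\infty}\frac{\mathbb{V}(S_n)}{n}=\frac{5+3\sqrt{5}}{40}=0.2927050983\ldots \]
   Context: A finite bitstring (a finite word over $\{0,1\}$) is called bimultus if each of its $1$s has at least one neighboring (adjacent) $1$ and each of its $0$s has at least one neighboring $0$; equivalently, it contains neither an isolated $1$ nor an isolated $0$. Bimultus bitstrings of length $n$ exist for every $n\ge 2$ (e.g. $0\cdots0$). $\mathbb{E}$ and $\mathbb{V}$ denote expectation and variance with respect to the uniform distribution on bimultus bitstrings of length $n$. *)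

theory Defs
  imports "HOL-Probability.Probability"
begin

definition bimultus :: "bool list \<Rightarrow> bool" where
  "bimultus xs \<longleftrightarrow>
     (\<forall>i < length xs. (i + 1 < length xs \<and> xs ! (i + 1) = xs ! i) \<or>
                        (0 < i \<and> xs ! (i - 1) = xs ! i))"

definition bimultus_strings :: "nat \<Rightarrow> bool list set" where
  "bimultus_strings n = {xs. length xs = n \<and> bimultus xs}"

definition bitsum :: "bool list \<Rightarrow> nat" where
  "bitsum xs = count_list xs True"

definition unif_bimultus :: "nat \<Rightarrow> bool list pmf" where
  "unif_bimultus n = pmf_of_set (bimultus_strings n)"

definition E_S :: "nat \<Rightarrow> real" where
  "E_S n = measure_pmf.expectation (unif_bimultus n) (\<lambda>xs. real (bitsum xs))"

definition V_S :: "nat \<Rightarrow> real" where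
  "V_S n = measure_pmf.variance (unif_bimultus n) (\<lambda>xs. real (bitsum xs))"

end

theory Submission
  imports Defs "HOL-Number_Theory.Fib"
begin

text \<open>A bimultus string is a concatenation of runs of length at least two. Removing its first
  run if that has length two, and otherwise the first bit, gives Fibonacci-type recurrences for the
  number of bimultus strings of length \<open>n\<close> starting with 1 and for the first two moments of
  their imbalance \<open>D = #1s - #0s\<close>; complementation maps the strings starting with 0 onto
  these and negates \<open>D\<close>. Hence \<open>E S\<^sub>n = n / 2\<close> exactly and \<open>V S\<^sub>n = E D\<^sup>2 / 4\<close>.
  The count is \<open>fib (n - 1)\<close>, the first moment is \<open>fib (n + 1) - fib n / 2 + O(1)\<close>, and the
  second moment is \<open>n (2 fib n + fib (n + 1)) / 5 + O(fib n)\<close>; dividing by \<open>4 n fib (n - 1)\<close>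
  gives the limit \<open>(3 \<phi> + 1) / 20 = (5 + 3 sqrt 5) / 40\<close>.\<close>

lemma bimultus_Nil [simp]: "bimultus []"
  by (simp add: bimultus_def)

lemma not_bimultus_singleton [simp]: "\<not> bimultus [a]"
  by (simp add: bimultus_def)

lemma bimultus_Cons_Cons:
  "bimultus (a # b # ys) \<longleftrightarrow>
     a = b \<and> (ys = [] \<or> hd ys \<noteq> b \<and> bimultus ys \<or> hd ys = b \<and> bimultus (b # ys))"
  by (cases ys) (auto simp: bimultus_def All_less_Suc2 nth_Cons split: nat.splits)

lemma bimultus_map_Not [simp]: "bimultus (map Not xs) \<longleftrightarrow> bimultus xs"
  by (auto simp: bimultus_def)

lemma finite_bimultus_strings: "finite (bimultus_strings n)"
  by (rule finite_subset[OF _ finite_lists_length_eq[of UNIV n]]) (auto simp: bimultus_strings_def)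

text \<open>The empty string is admitted so that the decomposition into a first run and the rest
  also covers strings made of a single run.\<close>
definition bimultus_starting :: "bool \<Rightarrow> nat \<Rightarrow> bool list set" where
  "bimultus_starting b n = {xs. length xs = n \<and> bimultus xs \<and> (xs = [] \<or> hd xs = b)}"

lemma bimultus_starting_0: "bimultus_starting b 0 = {[]}"
  by (auto simp: bimultus_starting_def)

lemma bimultus_starting_1: "bimultus_starting b (Suc 0) = {}"
  by (auto simp: bimultus_starting_def length_Suc_conv)

lemma finite_bimultus_starting: "finite (bimultus_starting b n)"
  by (rule finite_subset[OF _ finite_lists_length_eq[of UNIV n]]) (auto simp: bimultus_starting_def)

lemma bimultus_Cons_imp_hd: "bimultus (a # xs) \<Longrightarrow> xs \<noteq> [] \<and> hd xs = a"
  by (cases xs) (auto simp: bimultus_def)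

lemma bimultus_starting_Suc_Suc:
  "bimultus_starting b (Suc (Suc n)) =
     (\<lambda>ys. b # b # ys) ` bimultus_starting (\<not> b) n \<union> Cons b ` bimultus_starting b (Suc n)"
proof (rule set_eqI)
  fix xs
  show "xs \<in> bimultus_starting b (Suc (Suc n)) \<longleftrightarrow>
        xs \<in> (\<lambda>ys. b # b # ys) ` bimultus_starting (\<not> b) n \<union> Cons b ` bimultus_starting b (Suc n)"
  proof (cases "length xs = Suc (Suc n)")
    case True
    then obtain x y ys where "xs = x # y # ys" "length ys = n"
      by (auto simp: length_Suc_conv)
    then show ?thesis
      by (auto simp: bimultus_starting_def bimultus_Cons_Cons dest: bimultus_Cons_imp_hd)
  qed (auto simp: bimultus_starting_def)
qed

lemma bimultus_starting_Not: "bimultus_starting (\<not> b) n = map Not ` bimultus_starting b n"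
proof -
  have flip: "map Not ` bimultus_starting c n \<subseteq> bimultus_starting (\<not> c) n" for c
    by (auto simp: bimultus_starting_def hd_map)
  have "bimultus_starting (\<not> b) n = map Not ` map Not ` bimultus_starting (\<not> b) n"
    by (simp add: image_image comp_def)
  also have "\<dots> \<subseteq> map Not ` bimultus_starting b n"
    using image_mono[OF flip[of "\<not> b"]] by simp
  finally show ?thesis
    using flip by blast
qed

lemma sum_bimultus_starting_Not:
  "(\<Sum>xs\<in>bimultus_starting (\<not> b) n. f xs) = (\<Sum>xs\<in>bimultus_starting b n. f (map Not xs))"
  by (simp add: bimultus_starting_Not sum.reindex inj_on_def)

lemma sum_bimultus_starting_Suc_Suc:
  "(\<Sum>xs\<in>bimultus_starting b (Suc (Suc n)). f xs) =
     (\<Sum>ys\<in>bimultus_starting (\<not> b) n. f (b # b # ys)) + (\<Sum>ys\<in>bimultus_starting b (Suc n). f (b # ys))"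
proof -
  have "(\<lambda>ys. b # b # ys) ` bimultus_starting (\<not> b) n \<inter> Cons b ` bimultus_starting b (Suc n) = {}"
    by (auto simp: bimultus_starting_def dest: bimultus_Cons_imp_hd)
  then show ?thesis
    by (simp add: bimultus_starting_Suc_Suc sum.union_disjoint finite_bimultus_starting sum.reindex inj_on_def)
qed

lemma bimultus_strings_Suc:
  "bimultus_strings (Suc n) = bimultus_starting True (Suc n) \<union> bimultus_starting False (Suc n)"
  by (auto simp: bimultus_strings_def bimultus_starting_def)

lemma sum_bimultus_strings_Suc:
  "(\<Sum>xs\<in>bimultus_strings (Suc n). f xs) =
     (\<Sum>xs\<in>bimultus_starting True (Suc n). f xs + f (map Not xs))"
proof -
  have "bimultus_starting True (Suc n) \<inter> bimultus_starting False (Suc n) = {}"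
    by (auto simp: bimultus_starting_def)
  then show ?thesis
    using sum_bimultus_starting_Not[of f True "Suc n"]
    by (simp add: bimultus_strings_Suc sum.union_disjoint finite_bimultus_starting sum.distrib)
qed

definition imbalance :: "bool list \<Rightarrow> real" where
  "imbalance xs = (\<Sum>x\<leftarrow>xs. if x then 1 else -1)"

lemma imbalance_Nil [simp]: "imbalance [] = 0"
  by (simp add: imbalance_def)

lemma imbalance_Cons [simp]: "imbalance (x # xs) = (if x then 1 else -1) + imbalance xs"
  by (simp add: imbalance_def)

lemma imbalance_map_Not [simp]: "imbalance (map Not xs) = - imbalance xs"
  by (induction xs) auto

lemma bitsum_eq_imbalance: "real (bitsum xs) = (real (length xs) + imbalance xs) / 2"
  by (induction xs) (auto simp: bitsum_def field_simps)

definition imbalance_moment :: "nat \<Rightarrow> nat \<Rightarrow> real" where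
  "imbalance_moment k n = (\<Sum>xs\<in>bimultus_starting True n. imbalance xs ^ k)"

lemma sum_imbalance_bimultus_starting_Suc_Suc:
  "(\<Sum>xs\<in>bimultus_starting True (Suc (Suc n)). f (imbalance xs)) =
     (\<Sum>xs\<in>bimultus_starting True n. f (2 - imbalance xs)) +
     (\<Sum>xs\<in>bimultus_starting True (Suc n). f (1 + imbalance xs))"
  by (simp add: sum_bimultus_starting_Suc_Suc sum_bimultus_starting_Not[of _ False, simplified])

lemma imbalance_moment_0: "imbalance_moment 0 n = real (fib (Suc n)) - real (fib n)"
proof (induction n rule: fib.induct)
  case (3 n)
  then show ?case
    using sum_imbalance_bimultus_starting_Suc_Suc[of "\<lambda>_. 1 :: real" n]
    by (simp add: imbalance_moment_def)
qed (simp_all add: imbalance_moment_def bimultus_starting_0 bimultus_starting_1)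

lemma imbalance_moment_1_Suc_Suc:
  "imbalance_moment 1 (Suc (Suc n)) =
     2 * imbalance_moment 0 n - imbalance_moment 1 n + imbalance_moment 0 (Suc n) + imbalance_moment 1 (Suc n)"
  using sum_imbalance_bimultus_starting_Suc_Suc[of "\<lambda>x. x" n]
  by (simp add: imbalance_moment_def sum.distrib sum_subtractf sum_distrib_left)

lemma imbalance_moment_2_Suc_Suc:
  "imbalance_moment 2 (Suc (Suc n)) =
     4 * imbalance_moment 0 n - 4 * imbalance_moment 1 n + imbalance_moment 2 n +
     imbalance_moment 0 (Suc n) + 2 * imbalance_moment 1 (Suc n) + imbalance_moment 2 (Suc n)"
  using sum_imbalance_bimultus_starting_Suc_Suc[of "\<lambda>x. x\<^sup>2" n]
  by (simp add: imbalance_moment_def power2_eq_square algebra_simps sum.distrib sum_subtractf sum_distrib_left)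

text \<open>Such a sequence satisfies \<open>h (n + 3) = - h n\<close>.\<close>
lemma abs_le_initial_if_recurrence_diff:
  fixes h :: "nat \<Rightarrow> 'a :: linordered_idom"
  assumes rec: "\<And>n. h (Suc (Suc n)) = h (Suc n) - h n"
  shows "\<bar>h n\<bar> \<le> \<bar>h 0\<bar> + \<bar>h 1\<bar>"
proof (induction n rule: less_induct)
  case (less n)
  show ?case
  proof (cases "n < 3")
    case True
    then consider "n = 0" | "n = 1" | "n = 2"
      by linarith
    then show ?thesis
      using rec[of 0] by cases (simp_all add: numeral_2_eq_2)
  next
    case False
    then obtain k where k: "n = k + 3"
      by (metis add.commute le_Suc_ex not_less)
    have "h n = - h k"
      using rec[of k] rec[of "Suc k"] k by (simp add: numeral_3_eq_3)
    then show ?thesis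
      using less[of k] k by simp
  qed
qed

lemma abs_imbalance_moment_1_deviation_le:
  "\<bar>imbalance_moment 1 n - (real (fib (Suc n)) - real (fib n) / 2)\<bar> \<le> 3 / 2"
proof -
  define h where "h n = imbalance_moment 1 n - (real (fib (Suc n)) - real (fib n) / 2)" for n
  have "h (Suc (Suc n)) = h (Suc n) - h n" for n
    using imbalance_moment_1_Suc_Suc[of n] imbalance_moment_0[of n] imbalance_moment_0[of "Suc n"]
    by (simp add: h_def field_simps)
  then have "\<bar>h n\<bar> \<le> \<bar>h 0\<bar> + \<bar>h 1\<bar>"
    by (rule abs_le_initial_if_recurrence_diff)
  then show ?thesis
    by (simp add: h_def imbalance_moment_def bimultus_starting_0 bimultus_starting_1)
qed

text \<open>The lower moments grow like \<open>fib\<close>, i.e. at the rate of the characteristic roots of the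
  second-moment recurrence itself; this resonance produces the term linear in \<open>n\<close>.\<close>
lemma imbalance_moment_2_eq:
  "imbalance_moment 2 n =
     real n * (2 * real (fib n) + real (fib (Suc n))) / 5 + 7 * real (fib n) / 5 +
     2 * imbalance_moment 1 n - imbalance_moment 1 (Suc n)"
proof (induction n rule: fib.induct)
  case (3 n)
  then show ?case
    using imbalance_moment_2_Suc_Suc[of n] imbalance_moment_1_Suc_Suc[of n] imbalance_moment_1_Suc_Suc[of "Suc n"]
      imbalance_moment_0[of n] imbalance_moment_0[of "Suc n"] imbalance_moment_0[of "Suc (Suc n)"]
    by (simp add: field_simps)
next
  case 2
  then show ?case
    using imbalance_moment_1_Suc_Suc[of 0] imbalance_moment_0[of 0] imbalance_moment_0[of 1]
    by (simp add: imbalance_moment_def bimultus_starting_0 bimultus_starting_1)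
qed (simp add: imbalance_moment_def bimultus_starting_0 bimultus_starting_1)

lemma abs_imbalance_moment_2_minus_linear_le:
  "\<bar>imbalance_moment 2 n - real n * (2 * real (fib n) + real (fib (Suc n))) / 5\<bar> \<le> 6 * real (fib (Suc n))"
proof -
  have "real (fib n) \<le> real (fib (Suc n))" "1 \<le> real (fib (Suc n))"
    "real (fib (Suc (Suc n))) = real (fib (Suc n)) + real (fib n)"
    by (simp_all add: fib_Suc_mono Suc_le_eq fib_neq_0_nat)
  then show ?thesis
    using imbalance_moment_2_eq[of n] abs_imbalance_moment_1_deviation_le[of n]
      abs_imbalance_moment_1_deviation_le[of "Suc n"]
    unfolding abs_le_iff by linarith
qed

lemma fib_ratio_limit: "(\<lambda>n. real (fib (Suc n)) / real (fib n)) \<longlonglongrightarrow> (1 + sqrt 5) / 2"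
proof -
  define \<phi> :: real where "\<phi> = (1 + sqrt 5) / 2"
  define a where "a n = real (fib n) / (\<phi> ^ n / sqrt 5)" for n
  have "\<phi> > 0"
    by (simp add: \<phi>_def add_pos_nonneg)
  have "a \<longlonglongrightarrow> 1"
    unfolding a_def \<phi>_def by (rule fib_asymptotics)
  then have "(\<lambda>n. \<phi> * a (Suc n) / a n) \<longlonglongrightarrow> \<phi> * 1 / 1"
    by (intro tendsto_intros LIMSEQ_Suc) simp_all
  moreover have "\<phi> * a (Suc n) / a n = real (fib (Suc n)) / real (fib n)" for n
    using \<open>\<phi> > 0\<close> by (simp add: a_def field_simps)
  ultimately show ?thesis
    by (simp add: \<phi>_def)
qed

lemma card_bimultus_strings_Suc: "real (card (bimultus_strings (Suc n))) = 2 * real (fib n)"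
  using sum_bimultus_strings_Suc[of "\<lambda>_. 1 :: real" n] imbalance_moment_0[of "Suc n"]
  by (simp add: imbalance_moment_def)

lemma expectation_unif_bimultus:
  "measure_pmf.expectation (unif_bimultus (Suc (Suc n))) f =
     (\<Sum>xs\<in>bimultus_starting True (Suc (Suc n)). f xs + f (map Not xs)) / (2 * real (fib (Suc n)))"
proof -
  have "bimultus_strings (Suc (Suc n)) \<noteq> {}"
    using card_bimultus_strings_Suc[of "Suc n"] fib_neq_0_nat[of "Suc n"] by auto
  then show ?thesis
    by (simp add: unif_bimultus_def integral_pmf_of_set finite_bimultus_strings
        sum_bimultus_strings_Suc card_bimultus_strings_Suc del: of_nat_Suc)
qed

lemma card_bimultus_starting_True: "real (card (bimultus_starting True (Suc n))) = real (fib n)"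
  using imbalance_moment_0[of "Suc n"] by (simp add: imbalance_moment_def)

lemma E_S_Suc_Suc: "E_S (Suc (Suc n)) = real (Suc (Suc n)) / 2"
proof -
  let ?m = "Suc (Suc n)"
  have "E_S ?m = (\<Sum>xs\<in>bimultus_starting True ?m. real (bitsum xs) + real (bitsum (map Not xs))) /
                 (2 * real (fib (Suc n)))"
    by (simp add: E_S_def expectation_unif_bimultus del: of_nat_Suc)
  also have "\<dots> = (\<Sum>xs\<in>bimultus_starting True ?m. real ?m) / (2 * real (fib (Suc n)))"
    by (intro arg_cong2[where f = "(/)"] sum.cong)
      (auto simp: bitsum_eq_imbalance bimultus_starting_def field_simps simp del: of_nat_Suc)
  also have "\<dots> = real ?m / 2"
    using card_bimultus_starting_True[of "Suc n"] fib_neq_0_nat[of "Suc n"]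
    by (simp del: of_nat_Suc)
  finally show ?thesis .
qed

lemma V_S_Suc_Suc:
  "V_S (Suc (Suc n)) = imbalance_moment 2 (Suc (Suc n)) / (4 * real (fib (Suc n)))"
proof -
  let ?m = "Suc (Suc n)"
  have "V_S ?m = (\<Sum>xs\<in>bimultus_starting True ?m.
                   (real (bitsum xs) - real ?m / 2)\<^sup>2 + (real (bitsum (map Not xs)) - real ?m / 2)\<^sup>2) /
                 (2 * real (fib (Suc n)))"
    unfolding V_S_def E_S_def[symmetric] E_S_Suc_Suc
    by (simp add: expectation_unif_bimultus del: of_nat_Suc)
  also have "\<dots> = (\<Sum>xs\<in>bimultus_starting True ?m. (imbalance xs)\<^sup>2 / 2) / (2 * real (fib (Suc n)))"
    by (intro arg_cong2[where f = "(/)"] sum.cong)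
      (auto simp: bitsum_eq_imbalance bimultus_starting_def power2_eq_square field_simps simp del: of_nat_Suc)
  also have "\<dots> = imbalance_moment 2 ?m / (4 * real (fib (Suc n)))"
    by (simp add: imbalance_moment_def sum_divide_distrib[symmetric])
  finally show ?thesis .
qed

lemma abs_V_S_over_length_minus_fib_ratio_le:
  "\<bar>V_S (Suc (Suc m)) / real (Suc (Suc m)) - (3 * (real (fib (Suc (Suc m))) / real (fib (Suc m))) + 1) / 20\<bar>
     \<le> 5 / real (Suc (Suc m))"
proof -
  let ?n = "Suc (Suc m)"
  define F1 F2 F3 where "F1 = real (fib (Suc m))" and "F2 = real (fib ?n)" and "F3 = real (fib (Suc ?n))"
  define R where "R = imbalance_moment 2 ?n - real ?n * (2 * F2 + F3) / 5"
  have "F3 = F2 + F1" "F2 = F1 + real (fib m)" "real (fib m) \<le> F1" "1 \<le> F1"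
    by (simp_all add: F1_def F2_def F3_def fib_Suc_mono Suc_le_eq fib_neq_0_nat)
  then have F3_le: "F3 \<le> 3 * F1" and "F1 > 0"
    by linarith+
  have "V_S ?n / real ?n - (3 * (F2 / F1) + 1) / 20 = R / (4 * real ?n * F1)"
    using \<open>F1 > 0\<close> \<open>F3 = F2 + F1\<close>
    by (simp add: V_S_Suc_Suc R_def F1_def[symmetric] field_simps del: of_nat_Suc)
  also have "\<bar>\<dots>\<bar> \<le> 6 * F3 / (4 * real ?n * F1)"
    using abs_imbalance_moment_2_minus_linear_le[of ?n] \<open>F1 > 0\<close>
    by (simp add: R_def F2_def F3_def abs_mult divide_right_mono del: of_nat_Suc)
  also have "\<dots> \<le> 18 * F1 / (4 * real ?n * F1)"
    using F3_le \<open>F1 > 0\<close> by (intro divide_right_mono) simp_all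
  also have "\<dots> \<le> 5 / real ?n"
    using \<open>F1 > 0\<close> by (simp add: field_simps del: of_nat_Suc)
  finally show ?thesis
    by (simp add: F1_def F2_def)
qed

lemma E_S_over_length_limit: "(\<lambda>n. E_S n / real n) \<longlonglongrightarrow> 1 / 2"
proof (rule tendsto_eventually)
  have "E_S (2 + m) / real (2 + m) = 1 / 2" for m
    by (simp add: add_2_eq_Suc E_S_Suc_Suc del: of_nat_Suc)
  then show "\<forall>\<^sub>F n in sequentially. E_S n / real n = 1 / 2"
    unfolding eventually_sequentially by (metis le_Suc_ex)
qed

lemma V_S_over_length_limit: "(\<lambda>n. V_S n / real n) \<longlonglongrightarrow> (5 + 3 * sqrt 5) / 40"
proof (rule LIMSEQ_imp_Suc, rule LIMSEQ_imp_Suc)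
  define ratio where "ratio m = real (fib (Suc (Suc m))) / real (fib (Suc m))" for m
  define main where "main m = (3 * ratio m + 1) / 20" for m
  define err where "err m = V_S (Suc (Suc m)) / real (Suc (Suc m)) - main m" for m
  have "ratio \<longlonglongrightarrow> (1 + sqrt 5) / 2"
    unfolding ratio_def by (rule LIMSEQ_Suc[OF fib_ratio_limit])
  then have "main \<longlonglongrightarrow> (3 * ((1 + sqrt 5) / 2) + 1) / 20"
    unfolding main_def by (intro tendsto_intros) simp_all
  moreover have "err \<longlonglongrightarrow> 0"
  proof (rule Lim_null_comparison)
    show "\<forall>\<^sub>F m in sequentially. norm (err m) \<le> 5 / real (Suc (Suc m))"
    proof (intro always_eventually allI)
      fix m
      have "\<bar>err m\<bar> \<le> 5 / real (Suc (Suc m))"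
        unfolding err_def main_def ratio_def by (rule abs_V_S_over_length_minus_fib_ratio_le)
      then show "norm (err m) \<le> 5 / real (Suc (Suc m))"
        by simp
    qed
    show "(\<lambda>m. 5 / real (Suc (Suc m))) \<longlonglongrightarrow> 0"
      using LIMSEQ_Suc[OF LIMSEQ_Suc[OF lim_const_over_n[of "5 :: real"]]] .
  qed
  ultimately have "(\<lambda>m. main m + err m) \<longlonglongrightarrow> (3 * ((1 + sqrt 5) / 2) + 1) / 20 + 0"
    by (rule tendsto_add)
  also have "(3 * ((1 + sqrt 5) / 2) + 1) / 20 + 0 = (5 + 3 * sqrt 5) / (40 :: real)"
    by (simp add: field_simps)
  finally show "(\<lambda>m. V_S (Suc (Suc m)) / real (Suc (Suc m))) \<longlonglongrightarrow> (5 + 3 * sqrt 5) / 40"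
    by (simp add: err_def)
qed

theorem mainTheorem1:
  shows "((\<lambda>n. E_S n / real n) \<longlonglongrightarrow> 1 / 2) \<and>
         ((\<lambda>n. V_S n / real n) \<longlonglongrightarrow> (5 + 3 * sqrt 5) / 40)"
  using E_S_over_length_limit V_S_over_length_limit by blast

end
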